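(* Let $r,\alpha\in\mathbb R$, $\sigma>0$, and let $d_1<d_2$ be the (assumed real and distinct) roots of $P(d)=\frac{\sigma^2}{2}d^2+(\alpha-\frac{\sigma^2}{2})d-r$. Let $x>0$, $\beta\in\mathbb R$, $a,b>0$, and for $c>0$, $t>0$ put $$H(t;c)=\Phi\left(\frac{1}{\sigma\sqrt t}\ln\left(\frac{c}{x}\right)+\sigma\left(\frac{d_1+d_2}{2}-\beta\right)\sqrt t\right),$$ where $\Phi$ is the standard normal distribution function. Then: 1) if $\beta<d_2$, then $\lim_{t\to\infty}x^\beta e^{P(\beta)t}[1-H(t;a)]=0$; 2) if $\beta>d_1$, then $\lim_{t\to\infty}x^\beta e^{P(\beta)t}H(t;b)=0$; 3) if $\beta=0$, then $\lim_{t\to\infty}x^\beta e^{P(\beta)t}[H(t;b)-H(t;a)]=0$. *)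

theory Defs
  imports "HOL-Probability.Probability"
begin

definition Phi :: "real \<Rightarrow> real" where
  "Phi = cdf (density lborel std_normal_density)"

definition Pq :: "real \<Rightarrow> real \<Rightarrow> real \<Rightarrow> real \<Rightarrow> real" where
  "Pq r \<alpha> \<sigma> d = \<sigma>\<^sup>2 / 2 * d\<^sup>2 + (\<alpha> - \<sigma>\<^sup>2 / 2) * d - r"

definition Hf :: "real \<Rightarrow> real \<Rightarrow> real \<Rightarrow> real \<Rightarrow> real \<Rightarrow> real \<Rightarrow> real \<Rightarrow> real" where
  "Hf \<sigma> d1 d2 \<beta> x t c =
     Phi (1 / (\<sigma> * sqrt t) * ln (c / x) + \<sigma> * ((d1 + d2) / 2 - \<beta>) * sqrt t)"

end

theory Submission
  imports Defs "HOL-Real_Asymp.Real_Asymp"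
begin

text \<open>
  Write \<open>m = (d\<^sub>1 + d\<^sub>2)/2\<close>. Since \<open>P(\<beta>) = \<sigma>\<^sup>2/2 (\<beta> - d\<^sub>1)(\<beta> - d\<^sub>2)\<close>, either \<open>P(\<beta>) < 0\<close>, and the
  exponential factor alone kills the bounded factor, or the argument of \<open>\<Phi>\<close> has the form
  \<open>L/\<surd>t + A\<surd>t\<close> with \<open>A = \<sigma>(m - \<beta>)\<close> of the sign that sends it into the tail of \<open>\<Phi>\<close> under
  consideration. The Gaussian tail bound \<open>exp(-z\<^sup>2/2)\<close> then contributes
  \<open>exp(-A\<^sup>2t/2 - AL)\<close>, and \<open>P(\<beta>) < A\<^sup>2/2\<close> holds for every \<open>\<beta>\<close> because
  \<open>A\<^sup>2/2 - P(\<beta>) = \<sigma>\<^sup>2(d\<^sub>2 - d\<^sub>1)\<^sup>2/8\<close>.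
\<close>

lemma std_normal_density_le_shifted:
  assumes "0 \<le> y * (u - y)"
  shows "std_normal_density u \<le> exp (- y\<^sup>2 / 2) * normal_density y 1 u"
proof -
  have "- u\<^sup>2 / 2 \<le> - y\<^sup>2 / 2 + - (u - y)\<^sup>2 / 2"
    using assms by (simp add: power2_eq_square algebra_simps)
  then have "exp (- u\<^sup>2 / 2) \<le> exp (- y\<^sup>2 / 2) * exp (- (u - y)\<^sup>2 / 2)"
    by (simp add: exp_add [symmetric])
  then show ?thesis
    unfolding normal_density_def by (simp add: divide_right_mono)
qed

lemma nn_integral_normal_density_1:
  "(\<integral>\<^sup>+u. ennreal (normal_density \<mu> 1 u) \<partial>lborel) = 1"
  using integrable_normal_density [of 1 \<mu>] integral_normal_density [of 1 \<mu>]
  by (subst nn_integral_eq_integral) auto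

lemma std_normal_measure_le_exp:
  assumes S: "S \<in> sets borel" and side: "\<And>u. u \<in> S \<Longrightarrow> 0 \<le> y * (u - y)"
  shows "measure (density lborel std_normal_density) S \<le> exp (- y\<^sup>2 / 2)"
proof -
  have "emeasure (density lborel std_normal_density) S
      = (\<integral>\<^sup>+u. ennreal (std_normal_density u) * indicator S u \<partial>lborel)"
    using S by (simp add: emeasure_density)
  also have "\<dots> \<le> (\<integral>\<^sup>+u. ennreal (exp (- y\<^sup>2 / 2)) * ennreal (normal_density y 1 u) \<partial>lborel)"
    using std_normal_density_le_shifted [OF side]
    by (intro nn_integral_mono) (auto simp: indicator_def ennreal_mult' [symmetric])
  also have "\<dots> = ennreal (exp (- y\<^sup>2 / 2))"
    by (simp add: nn_integral_cmult nn_integral_normal_density_1)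
  finally show ?thesis
    by (simp add: measure_def enn2real_leI)
qed

interpretation std_normal: real_distribution "density lborel std_normal_density"
  by (fact real_dist_normal_dist)

lemma Phi_nonneg: "0 \<le> Phi y"
  unfolding Phi_def by (rule std_normal.cdf_nonneg)

lemma Phi_le_1: "Phi y \<le> 1"
  unfolding Phi_def by (rule std_normal.cdf_bounded_prob)

lemma Phi_le_exp: "y \<le> 0 \<Longrightarrow> Phi y \<le> exp (- y\<^sup>2 / 2)"
  unfolding Phi_def cdf_def
  by (rule std_normal_measure_le_exp) (auto intro: mult_nonpos_nonpos)

lemma one_minus_Phi_le_exp: "y \<ge> 0 \<Longrightarrow> 1 - Phi y \<le> exp (- y\<^sup>2 / 2)"
proof -
  assume "y \<ge> 0"
  have "1 - Phi y = std_normal.prob {y<..}"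
    using std_normal.prob_compl [of "{..y}"] by (simp add: Phi_def cdf_def Compl_eq_Diff_UNIV [symmetric])
  also have "std_normal.prob {y<..} \<le> exp (- y\<^sup>2 / 2)"
    using \<open>y \<ge> 0\<close> by (intro std_normal_measure_le_exp) auto
  finally show ?thesis .
qed

lemma abs_Phi_diff_le_1: "\<bar>Phi u - Phi v\<bar> \<le> 1"
  using Phi_nonneg [of u] Phi_nonneg [of v] Phi_le_1 [of u] Phi_le_1 [of v] by linarith

lemma exp_mult_gaussian_le:
  assumes "t > 0"
  shows "exp (P * t) * exp (- (L / sqrt t + A * sqrt t)\<^sup>2 / 2)
           \<le> exp ((P - A\<^sup>2 / 2) * t - A * L)"
proof -
  have "(L / sqrt t + A * sqrt t)\<^sup>2 = L\<^sup>2 / t + 2 * A * L + A\<^sup>2 * t"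
    using assms by (simp add: power2_eq_square field_simps)
  then have "P * t + - (L / sqrt t + A * sqrt t)\<^sup>2 / 2 = (P - A\<^sup>2 / 2) * t - A * L - L\<^sup>2 / t / 2"
    by (simp add: algebra_simps diff_divide_distrib add_divide_distrib)
  moreover have "L\<^sup>2 / t / 2 \<ge> 0"
    using assms by simp
  ultimately have "P * t + - (L / sqrt t + A * sqrt t)\<^sup>2 / 2 \<le> (P - A\<^sup>2 / 2) * t - A * L"
    by linarith
  then show ?thesis
    by (simp add: exp_add [symmetric])
qed

lemma tendsto_exp_mult_gaussian_bounded:
  fixes g :: "real \<Rightarrow> real"
  assumes P: "P < A\<^sup>2 / 2"
    and g: "\<forall>\<^sub>F t in at_top. 0 \<le> g t \<and> g t \<le> exp (- (L / sqrt t + A * sqrt t)\<^sup>2 / 2)"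
  shows "((\<lambda>t. exp (P * t) * g t) \<longlongrightarrow> 0) at_top"
proof (rule tendsto_sandwich [of "\<lambda>_. 0" _ _ "\<lambda>t. exp ((P - A\<^sup>2 / 2) * t - A * L)"])
  show "\<forall>\<^sub>F t in at_top. 0 \<le> exp (P * t) * g t"
    using g by eventually_elim simp
  show "\<forall>\<^sub>F t in at_top. exp (P * t) * g t \<le> exp ((P - A\<^sup>2 / 2) * t - A * L)"
    using g eventually_gt_at_top [of 0]
  proof eventually_elim
    case (elim t)
    then have "exp (P * t) * g t \<le> exp (P * t) * exp (- (L / sqrt t + A * sqrt t)\<^sup>2 / 2)"
      by simp
    also have "\<dots> \<le> exp ((P - A\<^sup>2 / 2) * t - A * L)"
      using elim(2) by (rule exp_mult_gaussian_le)
    finally show ?case .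
  qed
  show "((\<lambda>t. exp ((P - A\<^sup>2 / 2) * t - A * L)) \<longlongrightarrow> 0) at_top"
    using P by real_asymp
qed simp

lemma tendsto_exp_mult_one_minus_Phi:
  assumes "A > 0" "P < A\<^sup>2 / 2"
  shows "((\<lambda>t. exp (P * t) * (1 - Phi (L / sqrt t + A * sqrt t))) \<longlongrightarrow> 0) at_top"
proof (rule tendsto_exp_mult_gaussian_bounded [OF \<open>P < A\<^sup>2 / 2\<close>])
  have "filterlim (\<lambda>t. L / sqrt t + A * sqrt t) at_top at_top"
    using \<open>A > 0\<close> by real_asymp
  then have "\<forall>\<^sub>F t in at_top. 0 \<le> L / sqrt t + A * sqrt t"
    by (simp add: filterlim_at_top)
  then show "\<forall>\<^sub>F t in at_top. 0 \<le> 1 - Phi (L / sqrt t + A * sqrt t)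
      \<and> 1 - Phi (L / sqrt t + A * sqrt t) \<le> exp (- (L / sqrt t + A * sqrt t)\<^sup>2 / 2)"
    by eventually_elim (intro conjI one_minus_Phi_le_exp, simp_all add: Phi_le_1)
qed

lemma tendsto_exp_mult_Phi:
  assumes "A < 0" "P < A\<^sup>2 / 2"
  shows "((\<lambda>t. exp (P * t) * Phi (L / sqrt t + A * sqrt t)) \<longlongrightarrow> 0) at_top"
proof (rule tendsto_exp_mult_gaussian_bounded [OF \<open>P < A\<^sup>2 / 2\<close>])
  have "filterlim (\<lambda>t. L / sqrt t + A * sqrt t) at_bot at_top"
    using \<open>A < 0\<close> by real_asymp
  then have "\<forall>\<^sub>F t in at_top. L / sqrt t + A * sqrt t \<le> 0"
    by (simp add: filterlim_at_bot)
  then show "\<forall>\<^sub>F t in at_top. 0 \<le> Phi (L / sqrt t + A * sqrt t)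
      \<and> Phi (L / sqrt t + A * sqrt t) \<le> exp (- (L / sqrt t + A * sqrt t)\<^sup>2 / 2)"
    by eventually_elim (intro conjI Phi_le_exp, simp_all add: Phi_nonneg)
qed

lemma tendsto_exp_mult_bounded:
  fixes g :: "real \<Rightarrow> real"
  assumes "P < 0" and "\<And>t. \<bar>g t\<bar> \<le> 1"
  shows "((\<lambda>t. exp (P * t) * g t) \<longlongrightarrow> 0) at_top"
proof (rule Lim_null_comparison)
  show "\<forall>\<^sub>F t in at_top. norm (exp (P * t) * g t) \<le> exp (P * t)"
    using assms(2) by (intro always_eventually allI) (simp add: abs_mult mult_left_le)
  show "((\<lambda>t. exp (P * t)) \<longlongrightarrow> 0) at_top"
    using \<open>P < 0\<close> by real_asymp
qed

lemma Pq_eq_root_product: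
  assumes "Pq r \<alpha> \<sigma> d1 = 0" "Pq r \<alpha> \<sigma> d2 = 0" "d1 < d2"
  shows "Pq r \<alpha> \<sigma> \<beta> = \<sigma>\<^sup>2 / 2 * (\<beta> - d1) * (\<beta> - d2)"
proof -
  have "0 = Pq r \<alpha> \<sigma> d1 - Pq r \<alpha> \<sigma> d2"
    using assms by simp
  also have "\<dots> = (d1 - d2) * (\<sigma>\<^sup>2 / 2 * (d1 + d2) + (\<alpha> - \<sigma>\<^sup>2 / 2))"
    unfolding Pq_def by (simp add: power2_eq_square field_simps)
  finally have \<alpha>: "\<alpha> - \<sigma>\<^sup>2 / 2 = - \<sigma>\<^sup>2 / 2 * (d1 + d2)"
    using \<open>d1 < d2\<close> by simp
  have "r = \<sigma>\<^sup>2 / 2 * d1\<^sup>2 + (\<alpha> - \<sigma>\<^sup>2 / 2) * d1"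
    using assms(1) unfolding Pq_def by simp
  then have "r = - \<sigma>\<^sup>2 / 2 * d1 * d2"
    unfolding \<alpha> by (simp add: power2_eq_square field_simps)
  then show ?thesis
    unfolding Pq_def \<alpha> by (simp add: power2_eq_square algebra_simps)
qed

lemma Pq_neg_between_roots:
  assumes "\<sigma> > 0" "Pq r \<alpha> \<sigma> d1 = 0" "Pq r \<alpha> \<sigma> d2 = 0" "d1 < \<beta>" "\<beta> < d2"
  shows "Pq r \<alpha> \<sigma> \<beta> < 0"
proof -
  have "d1 < d2"
    using assms(4,5) by simp
  then show ?thesis
    using assms by (simp add: Pq_eq_root_product [OF assms(2,3)] mult_pos_neg)
qed

lemma Pq_less_half_square:
  assumes "\<sigma> > 0" "Pq r \<alpha> \<sigma> d1 = 0" "Pq r \<alpha> \<sigma> d2 = 0" "d1 < d2"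
  shows "Pq r \<alpha> \<sigma> \<beta> < (\<sigma> * ((d1 + d2) / 2 - \<beta>))\<^sup>2 / 2"
proof -
  have "(\<sigma> * ((d1 + d2) / 2 - \<beta>))\<^sup>2 / 2 - Pq r \<alpha> \<sigma> \<beta> = \<sigma>\<^sup>2 * (d2 - d1)\<^sup>2 / 8"
    unfolding Pq_eq_root_product [OF assms(2-4)] by (simp add: power2_eq_square field_simps)
  also have "\<dots> > 0"
    using assms by simp
  finally show ?thesis
    by simp
qed

lemma Hf_eq: "Hf \<sigma> d1 d2 \<beta> x t c = Phi (ln (c / x) / \<sigma> / sqrt t + \<sigma> * ((d1 + d2) / 2 - \<beta>) * sqrt t)"
  unfolding Hf_def by simp

lemma tendsto_one_minus_Hf:
  assumes "\<sigma> > 0" "Pq r \<alpha> \<sigma> d1 = 0" "Pq r \<alpha> \<sigma> d2 = 0" "d1 < d2" "\<beta> < d2"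
  shows "((\<lambda>t. C * exp (Pq r \<alpha> \<sigma> \<beta> * t) * (1 - Hf \<sigma> d1 d2 \<beta> x t c)) \<longlongrightarrow> 0) at_top"
proof -
  have "((\<lambda>t. exp (Pq r \<alpha> \<sigma> \<beta> * t) * (1 - Hf \<sigma> d1 d2 \<beta> x t c)) \<longlongrightarrow> 0) at_top"
  proof (cases "\<beta> < (d1 + d2) / 2")
    case True
    then show ?thesis
      unfolding Hf_eq using assms
      by (intro tendsto_exp_mult_one_minus_Phi Pq_less_half_square) simp_all
  next
    case False
    with \<open>d1 < d2\<close> have "d1 < \<beta>"
      by (simp add: field_simps)
    with assms have "Pq r \<alpha> \<sigma> \<beta> < 0"
      by (intro Pq_neg_between_roots) auto
    then show ?thesis
      by (rule tendsto_exp_mult_bounded) (simp add: Hf_def abs_le_iff Phi_nonneg Phi_le_1)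
  qed
  then show ?thesis
    by (simp add: mult.assoc tendsto_mult_right_zero)
qed

lemma tendsto_Hf:
  assumes "\<sigma> > 0" "Pq r \<alpha> \<sigma> d1 = 0" "Pq r \<alpha> \<sigma> d2 = 0" "d1 < d2" "d1 < \<beta>"
  shows "((\<lambda>t. C * exp (Pq r \<alpha> \<sigma> \<beta> * t) * Hf \<sigma> d1 d2 \<beta> x t c) \<longlongrightarrow> 0) at_top"
proof -
  have "((\<lambda>t. exp (Pq r \<alpha> \<sigma> \<beta> * t) * Hf \<sigma> d1 d2 \<beta> x t c) \<longlongrightarrow> 0) at_top"
  proof (cases "\<beta> > (d1 + d2) / 2")
    case True
    then show ?thesis
      unfolding Hf_eq using assms
      by (intro tendsto_exp_mult_Phi Pq_less_half_square) (simp_all add: mult_pos_neg)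
  next
    case False
    with \<open>d1 < d2\<close> have "\<beta> < d2"
      by (simp add: field_simps)
    with assms have "Pq r \<alpha> \<sigma> \<beta> < 0"
      by (intro Pq_neg_between_roots) auto
    then show ?thesis
      by (rule tendsto_exp_mult_bounded) (simp add: Hf_def abs_le_iff Phi_nonneg Phi_le_1)
  qed
  then show ?thesis
    by (simp add: mult.assoc tendsto_mult_right_zero)
qed

lemma tendsto_Hf_diff:
  assumes roots: "\<sigma> > 0" "Pq r \<alpha> \<sigma> d1 = 0" "Pq r \<alpha> \<sigma> d2 = 0" "d1 < d2"
  shows "((\<lambda>t. C * exp (Pq r \<alpha> \<sigma> \<beta> * t) * (Hf \<sigma> d1 d2 \<beta> x t b - Hf \<sigma> d1 d2 \<beta> x t a)) \<longlongrightarrow> 0) at_top"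
proof -
  consider "d1 < \<beta>" "\<beta> < d2" | "\<beta> \<le> d1" | "d2 \<le> \<beta>"
    by linarith
  then show ?thesis
  proof cases
    case 1
    then have "((\<lambda>t. exp (Pq r \<alpha> \<sigma> \<beta> * t) * (Hf \<sigma> d1 d2 \<beta> x t b - Hf \<sigma> d1 d2 \<beta> x t a)) \<longlongrightarrow> 0) at_top"
      using roots
      by (intro tendsto_exp_mult_bounded Pq_neg_between_roots) (simp_all add: Hf_def abs_Phi_diff_le_1)
    then show ?thesis
      by (simp add: mult.assoc tendsto_mult_right_zero)
  next
    case 2
    with roots have "\<beta> < d2"
      by simp
    from tendsto_diff [OF tendsto_one_minus_Hf [OF roots this, where C = C and x = x and c = a]
                          tendsto_one_minus_Hf [OF roots this, where C = C and x = x and c = b]]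
    show ?thesis
      by (simp add: algebra_simps)
  next
    case 3
    with roots have "d1 < \<beta>"
      by simp
    from tendsto_diff [OF tendsto_Hf [OF roots this, where C = C and x = x and c = b]
                          tendsto_Hf [OF roots this, where C = C and x = x and c = a]]
    show ?thesis
      by (simp add: algebra_simps)
  qed
qed

theorem lemma2:
  fixes r \<alpha> \<sigma> d1 d2 x \<beta> a b :: real
  assumes "\<sigma> > 0"
    and "Pq r \<alpha> \<sigma> d1 = 0" and "Pq r \<alpha> \<sigma> d2 = 0" and "d1 < d2"
    and "x > 0" and "a > 0" and "b > 0"
  shows "(\<beta> < d2 \<longrightarrow>
           ((\<lambda>t. x powr \<beta> * exp (Pq r \<alpha> \<sigma> \<beta> * t) * (1 - Hf \<sigma> d1 d2 \<beta> x t a))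
              \<longlongrightarrow> 0) at_top)
       \<and> (\<beta> > d1 \<longrightarrow>
           ((\<lambda>t. x powr \<beta> * exp (Pq r \<alpha> \<sigma> \<beta> * t) * Hf \<sigma> d1 d2 \<beta> x t b)
              \<longlongrightarrow> 0) at_top)
       \<and> (\<beta> = 0 \<longrightarrow>
           ((\<lambda>t. x powr \<beta> * exp (Pq r \<alpha> \<sigma> \<beta> * t) * (Hf \<sigma> d1 d2 \<beta> x t b - Hf \<sigma> d1 d2 \<beta> x t a))
              \<longlongrightarrow> 0) at_top)"
  using tendsto_one_minus_Hf [OF assms(1-4)] tendsto_Hf [OF assms(1-4)] tendsto_Hf_diff [OF assms(1-4)]
  by blast

end
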